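(* Let $L\subset S^3$ be an oriented link and $\widehat{\mathcal{B}}_L$ its topological biquandle. For all $a,b,c\in\widehat{\mathcal{B}}_L$: (1) every up-type operation commutes with every down-type operation: $(a\uparrow b)\downarrow c=(a\downarrow c)\uparrow b$, $(a\Uparrow b)\downarrow c=(a\downarrow c)\Uparrow b$, $(a\uparrow b)\Downarrow c=(a\Downarrow c)\uparrow b$, $(a\Uparrow b)\Downarrow c=(a\Downarrow c)\Uparrow b$; (2) $(a\uparrow b)\Uparrow b=(a\Uparrow b)\uparrow b=(a\downarrow b)\Downarrow b=(a\Downarrow b)\downarrow b=a$; (3) $a\uparrow(b\downarrow c)=a\uparrow(b\Downarrow c)=a\uparrow b$, $a\Uparrow(b\downarrow c)=a\Uparrow(b\Downarrow c)=a\Uparrow b$, $a\downarrow(b\uparrow c)=a\downarrow(b\Uparrow c)=a\downarrow b$, and $a\Downarrow(b\uparrow c)=a\Downarrow(b\Uparrow c)=a\Downarrow b$.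
   Context: An oriented link $L$ is an oriented subspace of $S^3$ homeomorphic to a finite disjoint union of circles. Let $N_L$ be a regular neighborhood of $L$ and $E_L$ the closure of $S^3\setminus N_L$; the orientation of $L$ induces an orientation of its normal bundle by the right-hand rule. Choose a 3-ball $B^3\subset S^3$ with $N_L\subset B^3$ and antipodal points $z_0,z_1\in\partial B^3$. For a path $a$, $\overline{a}(t)=a(1-t)$; $a\cdot b$ is concatenation. Let $\mathcal{B}_L$ be the set of pairs $(a_0,a_1)$ with $a_i\colon[0,1]\to E_L$ a path from a point of $\partial N_L$ to $z_i$ and $a_0(0)=a_1(0)$. Set $(a_0,a_1)\sim(b_0,b_1)$ if there is a homotopy $H_t\colon[0,1]\to E_L$ with $H_0=\overline{a_0}\cdot a_1$, $H_1=\overline{b_0}\cdot b_1$, $H_t(0)=z_0$, $H_t(1)=z_1$, $H_t(\tfrac12)\in\partial N_L$ for all $t$. The topological biquandle is $\widehat{\mathcal{B}}_L=\mathcal{B}_L/\!\sim$ (classes $[a_0,a_1]$) with operations $[a_0,a_1]\uparrow[b_0,b_1]=[a_0\cdot\overline{b_0}\cdot m_{b_0(0)}\cdot b_0,\ a_1]$ and $[a_0,a_1]\downarrow[b_0,b_1]=[a_0,\ a_1\cdot\overline{b_1}\cdot m_{b_1(0)}\cdot b_1]$, where for $p\in\partial N_L$, $m_p$ is the loop in $\partial N_L$ at $p$ going once positively around the meridian of the corresponding component of $L$; it is a biquandle. In any biquandle, with $S(x,y)=(y\downarrow x,\ x\uparrow y)$ (a bijection), the up-bar and down-bar operations are defined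 by $S^{-1}(a,b)=(b\Uparrow a,\ a\Downarrow b)$. *)

theory Defs
  imports "HOL-Analysis.Analysis"
begin

definition S3 :: "(real^4) set" where
  "S3 = sphere 0 1"

text \<open>A tame oriented link with k components is encoded by a (closed) tubular
  neighbourhood parametrisation  phi : (k copies of S^1 x D^2) -> S^3, injective and continuous
  (hence a homeomorphism onto its image, the regular neighbourhood N_L).  Component i of L is
  u |-> phi (i,u,0), oriented by increasing argument of u.\<close>
definition tor_dom :: "nat \<Rightarrow> (nat \<times> complex \<times> complex) set" where
  "tor_dom k = {(i,u,w). i < k \<and> norm u = 1 \<and> norm w \<le> 1}"

definition tor_bdry :: "nat \<Rightarrow> (nat \<times> complex \<times> complex) set" where
  "tor_bdry k = {(i,u,w). i < k \<and> norm u = 1 \<and> norm w = 1}"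

definition link_of :: "(nat \<times> complex \<times> complex \<Rightarrow> real^4) \<Rightarrow> nat \<Rightarrow> (real^4) set" where
  "link_of \<phi> k = \<phi> ` {(i,u,w). i < k \<and> norm u = 1 \<and> w = 0}"

definition nbhd :: "(nat \<times> complex \<times> complex \<Rightarrow> real^4) \<Rightarrow> nat \<Rightarrow> (real^4) set" where
  "nbhd \<phi> k = \<phi> ` tor_dom k"

definition bdry :: "(nat \<times> complex \<times> complex \<Rightarrow> real^4) \<Rightarrow> nat \<Rightarrow> (real^4) set" where
  "bdry \<phi> k = \<phi> ` tor_bdry k"

definition ext :: "(nat \<times> complex \<times> complex \<Rightarrow> real^4) \<Rightarrow> nat \<Rightarrow> (real^4) set" where
  "ext \<phi> k = closure (S3 - nbhd \<phi> k)"

text \<open>Meridian loop at a point p of the boundary: it runs once around the D^2 factor.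
  The sign \<epsilon> (1 or -1) selects the direction; the positive (right-hand rule) direction is one
  of these two.\<close>
definition meridian ::
  "(nat \<times> complex \<times> complex \<Rightarrow> real^4) \<Rightarrow> nat \<Rightarrow> real \<Rightarrow> real^4 \<Rightarrow> (real \<Rightarrow> real^4)" where
  "meridian \<phi> k \<epsilon> p =
     (let (i,u,w) = inv_into (tor_bdry k) \<phi> p
      in (\<lambda>t. \<phi> (i, u, w * exp (complex_of_real (2 * pi * \<epsilon> * t) * \<i>))))"

definition arcs ::
  "(nat \<times> complex \<times> complex \<Rightarrow> real^4) \<Rightarrow> nat \<Rightarrow> real^4 \<Rightarrow> real^4
     \<Rightarrow> ((real \<Rightarrow> real^4) \<times> (real \<Rightarrow> real^4)) set" where
  "arcs \<phi> k z0 z1 = {(a0, a1).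
      path a0 \<and> path a1 \<and> path_image a0 \<subseteq> ext \<phi> k \<and> path_image a1 \<subseteq> ext \<phi> k \<and>
      pathstart a0 \<in> bdry \<phi> k \<and> pathstart a1 = pathstart a0 \<and>
      pathfinish a0 = z0 \<and> pathfinish a1 = z1}"

definition arc_rel ::
  "(nat \<times> complex \<times> complex \<Rightarrow> real^4) \<Rightarrow> nat \<Rightarrow> real^4 \<Rightarrow> real^4
     \<Rightarrow> (((real \<Rightarrow> real^4) \<times> (real \<Rightarrow> real^4)) \<times> ((real \<Rightarrow> real^4) \<times> (real \<Rightarrow> real^4))) set" where
  "arc_rel \<phi> k z0 z1 = {((a0, a1), (b0, b1)).
      (a0, a1) \<in> arcs \<phi> k z0 z1 \<and> (b0, b1) \<in> arcs \<phi> k z0 z1 \<and>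
      homotopic_with_canon (\<lambda>r. r 0 = z0 \<and> r 1 = z1 \<and> r (1/2) \<in> bdry \<phi> k)
        {0..1} (ext \<phi> k) (reversepath a0 +++ a1) (reversepath b0 +++ b1)}"

definition biq ::
  "(nat \<times> complex \<times> complex \<Rightarrow> real^4) \<Rightarrow> nat \<Rightarrow> real^4 \<Rightarrow> real^4
     \<Rightarrow> ((real \<Rightarrow> real^4) \<times> (real \<Rightarrow> real^4)) set set" where
  "biq \<phi> k z0 z1 = arcs \<phi> k z0 z1 // arc_rel \<phi> k z0 z1"

definition up_rep where
  "up_rep \<phi> k \<epsilon> a b =
     (fst a +++ reversepath (fst b) +++ meridian \<phi> k \<epsilon> (pathstart (fst b)) +++ fst b, snd a)"

definition down_rep where
  "down_rep \<phi> k \<epsilon> a b =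
     (fst a, snd a +++ reversepath (snd b) +++ meridian \<phi> k \<epsilon> (pathstart (snd b)) +++ snd b)"

definition bq_up where
  "bq_up \<phi> k \<epsilon> z0 z1 X Y =
     arc_rel \<phi> k z0 z1 `` {up_rep \<phi> k \<epsilon> (SOME x. x \<in> X) (SOME y. y \<in> Y)}"

definition bq_down where
  "bq_down \<phi> k \<epsilon> z0 z1 X Y =
     arc_rel \<phi> k z0 z1 `` {down_rep \<phi> k \<epsilon> (SOME x. x \<in> X) (SOME y. y \<in> Y)}"

definition bq_S where
  "bq_S \<phi> k \<epsilon> z0 z1 p = (bq_down \<phi> k \<epsilon> z0 z1 (snd p) (fst p), bq_up \<phi> k \<epsilon> z0 z1 (fst p) (snd p))"

definition bq_Sinv where
  "bq_Sinv \<phi> k \<epsilon> z0 z1 q =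
     (THE p. p \<in> biq \<phi> k z0 z1 \<times> biq \<phi> k z0 z1 \<and> bq_S \<phi> k \<epsilon> z0 z1 p = q)"

definition bq_Up where
  "bq_Up \<phi> k \<epsilon> z0 z1 b a = fst (bq_Sinv \<phi> k \<epsilon> z0 z1 (a, b))"

definition bq_Down where
  "bq_Down \<phi> k \<epsilon> z0 z1 a b = snd (bq_Sinv \<phi> k \<epsilon> z0 z1 (a, b))"

end

theory Submission
  imports Defs
begin

text \<open>A pair of arcs represents the based path \<open>rev a\<^sub>0 \<cdot> a\<^sub>1\<close>. The operation \<open>\<uparrow> b\<close> only
  appends to the first arc the loop \<open>rev b\<^sub>0 \<cdot> m \<cdot> b\<^sub>0\<close> at \<open>z\<^sub>0\<close>, which depends on \<open>b\<^sub>0\<close> alone, and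
  \<open>\<downarrow> c\<close> only changes the second arc in the same way. On representatives, up- and down-operations
  therefore commute, and \<open>\<uparrow>\<close> ignores what \<open>\<downarrow>\<close> does to its right argument and vice versa. Reversing
  the meridian inverts the loop, so the operations with the reversed meridian cancel the given ones
  up to homotopy; consequently they make up \<open>S\<^sup>-\<^sup>1\<close>, i.e. they are the bar operations, and all
  identities follow. The topology enters in two places: the operations are well defined because a
  homotopy of \<open>rev a\<^sub>0 \<cdot> a\<^sub>1\<close> splits at its midpoint into homotopies of the two arcs whose common
  starting point slides along \<open>\<partial>N\<^sub>L\<close>, and \<open>\<partial>N\<^sub>L \<subseteq> E\<^sub>L\<close> holds by invariance of domain.\<close>

lemma homotopic_with_canon_pinned_iff:
  "homotopic_with_canon (\<lambda>r. r 0 = z0 \<and> r 1 = z1 \<and> r (1/2::real) \<in> B) {0..1} S (p::real \<Rightarrow> _) q \<longleftrightarrow>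
   (\<exists>h. continuous_on ({0..1} \<times> {0..1}) h \<and> h \<in> ({0..1} \<times> {0..1}) \<rightarrow> S \<and>
        (\<forall>x\<in>{0..1}. h (0,x) = p x) \<and> (\<forall>x\<in>{0..1}. h (1,x) = q x) \<and>
        (\<forall>t\<in>{0..1::real}. h (t,0) = z0 \<and> h (t,1) = z1 \<and> h (t,1/2) \<in> B))"
  by (auto simp: homotopic_with)

lemma homotopic_paths_iff_map:
  "homotopic_paths S p q \<longleftrightarrow>
   (\<exists>h. continuous_on ({0..1} \<times> {0..1}) h \<and> h \<in> ({0..1} \<times> {0..1}) \<rightarrow> S \<and>
        (\<forall>x\<in>{0..1}. h (0,x) = p x) \<and> (\<forall>x\<in>{0..1}. h (1,x) = q x) \<and>
        (\<forall>t\<in>{0..1::real}. h (t,0) = p 0 \<and> h (t,1) = p 1))"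
  by (auto simp: homotopic_paths pathstart_def pathfinish_def)

abbreviation unit_square :: "(real \<times> real) set" where
  "unit_square \<equiv> {0..1} \<times> {0..1}"

lemma continuous_on_slice:
  assumes "continuous_on unit_square L" "s \<in> {0..1}" "\<forall>t\<in>{0..1}. L (s,t) = x t"
  shows "continuous_on {0..1} x"
proof -
  have "continuous_on {0..1} (L \<circ> Pair s)" using continuous_on_o_Pair[OF assms(1) assms(2)] .
  then show ?thesis by (rule continuous_on_eq) (use assms(3) in auto)
qed

lemma continuous_on_path_snd:
  "path \<gamma> \<Longrightarrow> continuous_on unit_square (\<lambda>y. \<gamma> (snd y))"
  unfolding path_def
  by (rule continuous_on_compose2[of _ _ _ snd]) (auto intro!: continuous_intros)

lemma continuous_on_reversepath_family:
  assumes "continuous_on unit_square L"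
  shows "continuous_on unit_square (\<lambda>y. reversepath (\<lambda>t. L (fst y, t)) (snd y))"
  unfolding reversepath_def
  by (rule continuous_on_compose2[OF assms, of _ "\<lambda>y. (fst y, 1 - snd y)", simplified])
     (auto intro!: continuous_intros)

definition arc_pair_homotopy ::
  "'a::topological_space set \<Rightarrow> 'a set \<Rightarrow> 'a \<Rightarrow> 'a \<Rightarrow> (real \<times> real \<Rightarrow> 'a) \<Rightarrow> (real \<times> real \<Rightarrow> 'a)
     \<Rightarrow> (real \<Rightarrow> 'a) \<Rightarrow> (real \<Rightarrow> 'a) \<Rightarrow> (real \<Rightarrow> 'a) \<Rightarrow> (real \<Rightarrow> 'a) \<Rightarrow> bool" where
  "arc_pair_homotopy S B z0 z1 L R x0 x1 y0 y1 \<longleftrightarrow>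
     continuous_on unit_square L \<and> continuous_on unit_square R \<and>
     L \<in> unit_square \<rightarrow> S \<and> R \<in> unit_square \<rightarrow> S \<and>
     (\<forall>t\<in>{0..1}. L (0,t) = x0 t \<and> L (1,t) = y0 t \<and> R (0,t) = x1 t \<and> R (1,t) = y1 t) \<and>
     (\<forall>s\<in>{0..1}. L (s,0) = R (s,0) \<and> L (s,0) \<in> B \<and> L (s,1) = z0 \<and> R (s,1) = z1)"

lemma arc_pair_homotopyD:
  assumes "arc_pair_homotopy S B z0 z1 L R x0 x1 y0 y1"
  shows "continuous_on unit_square L" "continuous_on unit_square R"
    "L \<in> unit_square \<rightarrow> S" "R \<in> unit_square \<rightarrow> S"
    "\<And>t. t \<in> {0..1} \<Longrightarrow> L (0,t) = x0 t" "\<And>t. t \<in> {0..1} \<Longrightarrow> L (1,t) = y0 t"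
    "\<And>t. t \<in> {0..1} \<Longrightarrow> R (0,t) = x1 t" "\<And>t. t \<in> {0..1} \<Longrightarrow> R (1,t) = y1 t"
    "\<And>s. s \<in> {0..1} \<Longrightarrow> L (s,0) = R (s,0)" "\<And>s. s \<in> {0..1} \<Longrightarrow> L (s,0) \<in> B"
    "\<And>s. s \<in> {0..1} \<Longrightarrow> L (s,1) = z0" "\<And>s. s \<in> {0..1} \<Longrightarrow> R (s,1) = z1"
  using assms unfolding arc_pair_homotopy_def by blast+

lemma arc_pair_homotopy_swap:
  "arc_pair_homotopy S B z0 z1 L R x0 x1 y0 y1 \<Longrightarrow> arc_pair_homotopy S B z1 z0 R L x1 x0 y1 y0"
  unfolding arc_pair_homotopy_def by auto


lemma arc_pair_homotopy_imp_homotopic: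
  assumes "arc_pair_homotopy S B z0 z1 L R x0 x1 y0 y1"
  shows "homotopic_with_canon (\<lambda>r. r 0 = z0 \<and> r 1 = z1 \<and> r (1/2::real) \<in> B) {0..1} S
           (reversepath x0 +++ x1) (reversepath y0 +++ y1)"
  unfolding homotopic_with_canon_pinned_iff
proof (intro exI conjI)
  note D = arc_pair_homotopyD[OF assms]
  let ?h = "\<lambda>y. ((\<lambda>s. reversepath (\<lambda>t. L (s,t))) (fst y) +++ (\<lambda>s t. R (s,t)) (fst y)) (snd y)"
  show "continuous_on unit_square ?h"
    by (rule continuous_on_homotopic_join_lemma)
       (use continuous_on_reversepath_family[OF D(1)] D(2,9) in
         \<open>auto simp: pathstart_def pathfinish_def reversepath_def\<close>)
  show "?h \<in> unit_square \<rightarrow> S"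
    using D(3,4) by (auto simp: joinpaths_def reversepath_def Pi_iff)
  show "\<forall>x\<in>{0..1}. ?h (0, x) = (reversepath x0 +++ x1) x"
    "\<forall>x\<in>{0..1}. ?h (1, x) = (reversepath y0 +++ y1) x"
    using D(5-8) by (auto simp: joinpaths_def reversepath_def)
  show "\<forall>t\<in>{0..1}. ?h (t, 0) = z0 \<and> ?h (t, 1) = z1 \<and> ?h (t, 1/2) \<in> B"
    using D(9-12) by (simp add: joinpaths_def reversepath_def)
qed

lemma homotopic_imp_arc_pair_homotopy:
  assumes hom: "homotopic_with_canon (\<lambda>r. r 0 = z0 \<and> r 1 = z1 \<and> r (1/2::real) \<in> B) {0..1} S
                  (reversepath x0 +++ x1) (reversepath y0 +++ y1)"
    and starts: "x1 0 = x0 0" "y1 0 = y0 0"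
  shows "\<exists>L R. arc_pair_homotopy S B z0 z1 L R x0 x1 y0 y1"
proof -
  obtain h where hc: "continuous_on unit_square h" and hi: "h \<in> unit_square \<rightarrow> S"
    and h0: "\<forall>x\<in>{0..1}. h (0,x) = (reversepath x0 +++ x1) x"
    and h1: "\<forall>x\<in>{0..1}. h (1,x) = (reversepath y0 +++ y1) x"
    and ends: "\<forall>t\<in>{0..1::real}. h (t,0) = z0 \<and> h (t,1) = z1 \<and> h (t,1/2) \<in> B"
    using hom unfolding homotopic_with_canon_pinned_iff by blast
  define L where "L = (\<lambda>y. h (fst y, (1 - snd y) / 2))"
  define R where "R = (\<lambda>y. h (fst y, (1 + snd y) / 2))"
  have "arc_pair_homotopy S B z0 z1 L R x0 x1 y0 y1"
    unfolding arc_pair_homotopy_def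
  proof (intro conjI ballI)
    show "continuous_on unit_square L" "continuous_on unit_square R" unfolding L_def R_def
      by (rule continuous_on_compose2[OF hc, simplified]; auto intro!: continuous_intros)+
    show "L \<in> unit_square \<rightarrow> S" "R \<in> unit_square \<rightarrow> S"
      unfolding L_def R_def using hi by (auto simp: Pi_iff)
  next
    fix t :: real assume t: "t \<in> {0..1}"
    have "(1 - t) / 2 \<in> {0..1}" "(1 + t) / 2 \<in> {0..1}" using t by auto
    then show "L (0,t) = x0 t" "L (1,t) = y0 t" "R (0,t) = x1 t" "R (1,t) = y1 t"
      using h0 h1 starts t
      by (auto simp: L_def R_def joinpaths_def reversepath_def diff_divide_distrib add_divide_distrib)
  next
    fix s :: real assume "s \<in> {0..1}"
    then show "L (s,0) = R (s,0)" "L (s,0) \<in> B" "L (s,1) = z0" "R (s,1) = z1"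
      using ends by (simp_all add: L_def R_def)
  qed
  then show ?thesis by blast
qed

lemma arc_pair_homotopy_arcs:
  assumes "arc_pair_homotopy (ext \<phi> k) (bdry \<phi> k) z0 z1 L R x0 x1 y0 y1"
  shows "(x0,x1) \<in> arcs \<phi> k z0 z1" "(y0,y1) \<in> arcs \<phi> k z0 z1"
proof -
  note D = arc_pair_homotopyD[OF assms]
  have "path x0" "path y0" "path x1" "path y1"
    unfolding path_def
    by (rule continuous_on_slice[OF D(1), of 0] continuous_on_slice[OF D(1), of 1]
        continuous_on_slice[OF D(2), of 0] continuous_on_slice[OF D(2), of 1]; use D(5-8) in auto)+
  moreover have "path_image x0 \<subseteq> ext \<phi> k" "path_image y0 \<subseteq> ext \<phi> k"
    "path_image x1 \<subseteq> ext \<phi> k" "path_image y1 \<subseteq> ext \<phi> k"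
    unfolding path_image_def using D(3,4) by (auto simp: Pi_iff D(5-8)[symmetric])
  moreover have "x0 0 = L (0,0)" "x0 1 = L (0,1)" "x1 0 = R (0,0)" "x1 1 = R (0,1)"
    "y0 0 = L (1,0)" "y0 1 = L (1,1)" "y1 0 = R (1,0)" "y1 1 = R (1,1)"
    using D(5-8) by auto
  ultimately show "(x0,x1) \<in> arcs \<phi> k z0 z1" "(y0,y1) \<in> arcs \<phi> k z0 z1"
    unfolding arcs_def using D(9-12)[of 0] D(9-12)[of 1] by (auto simp: pathstart_def pathfinish_def)
qed

lemma arc_pair_homotopy_imp_arc_rel:
  assumes "arc_pair_homotopy (ext \<phi> k) (bdry \<phi> k) z0 z1 L R x0 x1 y0 y1"
  shows "((x0,x1),(y0,y1)) \<in> arc_rel \<phi> k z0 z1"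
  using arc_pair_homotopy_arcs[OF assms] arc_pair_homotopy_imp_homotopic[OF assms]
  unfolding arc_rel_def by simp

lemma arc_rel_imp_arc_pair_homotopy:
  assumes "((x0,x1),(y0,y1)) \<in> arc_rel \<phi> k z0 z1"
  obtains L R where "arc_pair_homotopy (ext \<phi> k) (bdry \<phi> k) z0 z1 L R x0 x1 y0 y1"
proof -
  have "x1 0 = x0 0" "y1 0 = y0 0"
    using assms unfolding arc_rel_def arcs_def by (auto simp: pathstart_def)
  then show ?thesis
    using that homotopic_imp_arc_pair_homotopy assms unfolding arc_rel_def by blast
qed

lemma arc_rel_swap:
  assumes "(x,y) \<in> arc_rel \<phi> k z0 z1"
  shows "(prod.swap x, prod.swap y) \<in> arc_rel \<phi> k z1 z0"
proof (cases x, cases y)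
  fix x0 x1 y0 y1 assume xy: "x = (x0,x1)" "y = (y0,y1)"
  from assms xy obtain L R where "arc_pair_homotopy (ext \<phi> k) (bdry \<phi> k) z0 z1 L R x0 x1 y0 y1"
    using arc_rel_imp_arc_pair_homotopy by blast
  from arc_pair_homotopy_imp_arc_rel[OF arc_pair_homotopy_swap[OF this]]
  show "(prod.swap x, prod.swap y) \<in> arc_rel \<phi> k z1 z0" using xy by simp
qed

lemma arcs_swap: "x \<in> arcs \<phi> k z0 z1 \<Longrightarrow> prod.swap x \<in> arcs \<phi> k z1 z0"
  unfolding arcs_def by auto

lemma down_rep_swap: "down_rep \<phi> k e x y = prod.swap (up_rep \<phi> k e (prod.swap x) (prod.swap y))"
  by (simp add: down_rep_def up_rep_def)

lemma exp_two_pi_sign: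
  assumes "\<bar>e\<bar> = 1"
  shows "exp (complex_of_real (2 * pi * e) * \<i>) = 1"
proof -
  have "e = 1 \<or> e = -1" using assms by (auto simp: abs_if split: if_splits)
  then show ?thesis
  proof
    assume "e = -1"
    then have "complex_of_real (2 * pi * e) * \<i> = - (2 * complex_of_real pi * \<i>)" by simp
    then show ?thesis by (simp only: exp_minus exp_two_pi_i inverse_1)
  qed (simp add: exp_two_pi_i')
qed

lemma norm_exp_of_real_mult_i: "norm (exp (complex_of_real x * \<i>)) = 1"
  by (simp add: norm_exp_i_times[of x, simplified mult.commute] mult.commute)

lemma tor_dom_eq: "tor_dom k = {..<k} \<times> (sphere 0 1 \<times> cball 0 1)"
  by (auto simp: tor_dom_def)

lemma tor_bdry_eq: "tor_bdry k = {..<k} \<times> (sphere 0 1 \<times> sphere 0 1)"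
  by (auto simp: tor_bdry_def)

lemma compact_tor_dom: "compact (tor_dom k)"
  unfolding tor_dom_eq by (auto intro!: compact_Times[OF finite_imp_compact compact_Times])

lemma compact_tor_bdry: "compact (tor_bdry k)"
  unfolding tor_bdry_eq by (auto intro!: compact_Times[OF finite_imp_compact compact_Times])

lemma tor_bdry_subset_dom: "tor_bdry k \<subseteq> tor_dom k"
  by (auto simp: tor_bdry_def tor_dom_def)

text \<open>Coordinates near the point \<open>(i, u\<^sub>0, w\<^sub>0)\<close> of the boundary torus, after rotating \<open>u\<^sub>0\<close>
  and \<open>w\<^sub>0\<close> to \<open>1\<close>.\<close>
definition tor_chart :: "complex \<Rightarrow> complex \<Rightarrow> nat \<times> complex \<times> complex \<Rightarrow> real \<times> real \<times> real" where
  "tor_chart u0 w0 = (\<lambda>(j,u,w). (Im (u * cnj u0), Im (w * cnj w0), Re (w * cnj w0)))"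

lemma unit_complex_eq_by_Im:
  fixes a b :: complex
  assumes "norm a = 1" "norm b = 1" "Re a > 0" "Re b > 0" "Im a = Im b"
  shows "a = b"
proof -
  have "(Re a)\<^sup>2 + (Im a)\<^sup>2 = 1" "(Re b)\<^sup>2 + (Im b)\<^sup>2 = 1"
    using assms(1,2) by (simp_all add: cmod_def)
  then have "(Re a)\<^sup>2 = (Re b)\<^sup>2" using assms(5) by simp
  then have "Re a = Re b" using assms(3,4) by (simp add: power2_eq_iff_nonneg)
  then show ?thesis using assms(5) complex_eqI by blast
qed

lemma inj_on_tor_chart:
  assumes u0: "norm u0 = 1" and w0: "norm w0 = 1"
  shows "inj_on (tor_chart u0 w0) {(j,u,w). j = i \<and> norm u = 1 \<and> 0 < Re (u * cnj u0)}"
proof (rule inj_onI)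
  fix x y :: "nat \<times> complex \<times> complex"
  assume "x \<in> {(j,u,w). j = i \<and> norm u = 1 \<and> 0 < Re (u * cnj u0)}"
    and "y \<in> {(j,u,w). j = i \<and> norm u = 1 \<and> 0 < Re (u * cnj u0)}"
  then obtain u w u' w' where xy: "x = (i,u,w)" "y = (i,u',w')"
    and "norm u = 1" "0 < Re (u * cnj u0)" "norm u' = 1" "0 < Re (u' * cnj u0)"
    by auto
  moreover assume "tor_chart u0 w0 x = tor_chart u0 w0 y"
  ultimately have eq: "Im (u * cnj u0) = Im (u' * cnj u0)"
    "Re (w * cnj w0) = Re (w' * cnj w0)" "Im (w * cnj w0) = Im (w' * cnj w0)"
    and "norm u = 1" "0 < Re (u * cnj u0)" "norm u' = 1" "0 < Re (u' * cnj u0)"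
    unfolding tor_chart_def by (simp_all only: prod.case prod.inject)
  then have "u * cnj u0 = u' * cnj u0"
    by (intro unit_complex_eq_by_Im) (auto simp: norm_mult u0)
  moreover have "w * cnj w0 = w' * cnj w0" using eq(2,3) by (rule complex_eqI)
  moreover have "cnj u0 \<noteq> 0" "cnj w0 \<noteq> 0" using u0 w0 by auto
  ultimately show "x = y" using xy by simp
qed

lemma tor_chart_le_one:
  assumes "x \<in> tor_dom k" "norm w0 = 1"
  shows "snd (snd (tor_chart u0 w0 x)) \<le> 1"
proof -
  obtain j u w where x: "x = (j,u,w)" using prod_cases3 by blast
  have "Re (w * cnj w0) \<le> norm (w * cnj w0)" by (rule complex_Re_le_cmod)
  also have "\<dots> \<le> 1" using assms by (simp add: x tor_dom_def norm_mult)
  finally show ?thesis by (simp add: x tor_chart_def)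
qed

lemma open_exceeds_last_coordinate:
  fixes U :: "(real \<times> real \<times> real) set"
  assumes "open U" "x \<in> U"
  obtains y where "y \<in> U" "snd (snd x) < snd (snd y)"
proof -
  obtain d where d: "d > 0" "ball x d \<subseteq> U" using assms open_contains_ball by blast
  obtain a b c where x: "x = (a,b,c)" using prod_cases3 by blast
  have "dist x (a, b, c + d/2) = d/2" using d(1) by (simp add: x dist_Pair_Pair dist_real_def)
  then have "(a, b, c + d/2) \<in> U" using d by auto
  then show ?thesis using that d(1) x by simp
qed

locale link_tube =
  fixes \<phi> :: "nat \<times> complex \<times> complex \<Rightarrow> real^4" and k :: nat
  assumes tube_cont: "continuous_on (tor_dom k) \<phi>" and tube_inj: "inj_on \<phi> (tor_dom k)"
    and tube_S3: "\<phi> ` tor_dom k \<subseteq> S3"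
begin

definition bdry_coord :: "real^4 \<Rightarrow> nat \<times> complex \<times> complex" where
  "bdry_coord = inv_into (tor_bdry k) \<phi>"

definition nbhd_coord :: "real^4 \<Rightarrow> nat \<times> complex \<times> complex" where
  "nbhd_coord = inv_into (tor_dom k) \<phi>"

lemma inj_on_tor_bdry: "inj_on \<phi> (tor_bdry k)"
  using tube_inj tor_bdry_subset_dom inj_on_subset by blast

lemma continuous_on_bdry_coord: "continuous_on (bdry \<phi> k) bdry_coord"
  unfolding bdry_def bdry_coord_def
  by (rule continuous_on_inv[OF continuous_on_subset[OF tube_cont tor_bdry_subset_dom] compact_tor_bdry])
     (simp add: inv_into_f_f[OF inj_on_tor_bdry])

lemma continuous_on_nbhd_coord: "continuous_on (nbhd \<phi> k) nbhd_coord"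
  unfolding nbhd_def nbhd_coord_def
  by (rule continuous_on_inv[OF tube_cont compact_tor_dom]) (simp add: inv_into_f_f[OF tube_inj])

lemma bdry_coord_in: "p \<in> bdry \<phi> k \<Longrightarrow> bdry_coord p \<in> tor_bdry k"
  unfolding bdry_def bdry_coord_def by (rule inv_into_into)

lemma phi_bdry_coord: "p \<in> bdry \<phi> k \<Longrightarrow> \<phi> (bdry_coord p) = p"
  unfolding bdry_def bdry_coord_def by (rule f_inv_into_f)

definition meridian_lift :: "real \<Rightarrow> (real^4) \<times> real \<Rightarrow> nat \<times> complex \<times> complex" where
  "meridian_lift e z = (case bdry_coord (fst z) of (i,u,w) \<Rightarrow>
     (i, u, w * exp (complex_of_real (2 * pi * e * snd z) * \<i>)))"

lemma meridian_eq: "meridian \<phi> k e p t = \<phi> (meridian_lift e (p,t))"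
  unfolding meridian_def meridian_lift_def bdry_coord_def by (simp add: case_prod_beta)

lemma meridian_lift_in: "p \<in> bdry \<phi> k \<Longrightarrow> meridian_lift e (p,t) \<in> tor_bdry k"
  using bdry_coord_in[of p]
  by (auto simp: meridian_lift_def tor_bdry_def norm_mult norm_exp_of_real_mult_i split: prod.splits)

lemma continuous_on_meridian:
  "continuous_on (bdry \<phi> k \<times> {0..1}) (\<lambda>z. meridian \<phi> k e (fst z) (snd z))"
proof -
  have "continuous_on (bdry \<phi> k \<times> {0..1}) (\<lambda>z. bdry_coord (fst z))"
    by (rule continuous_on_compose2[OF continuous_on_bdry_coord continuous_on_fst]) auto
  then have "continuous_on (bdry \<phi> k \<times> {0..1}) (meridian_lift e)"
    unfolding meridian_lift_def case_prod_beta by (intro continuous_intros)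
  then show ?thesis unfolding meridian_eq prod.collapse
    by (rule continuous_on_compose2[OF tube_cont])
       (use meridian_lift_in tor_bdry_subset_dom in force)
qed

lemma meridian_start: "p \<in> bdry \<phi> k \<Longrightarrow> meridian \<phi> k e p 0 = p"
  unfolding meridian_eq meridian_lift_def using phi_bdry_coord[of p] by (simp split: prod.splits)

lemma meridian_finish: "\<bar>e\<bar> = 1 \<Longrightarrow> p \<in> bdry \<phi> k \<Longrightarrow> meridian \<phi> k e p 1 = p"
  unfolding meridian_eq meridian_lift_def using phi_bdry_coord[of p] exp_two_pi_sign[of e]
  by (simp split: prod.splits)

lemma meridian_in_bdry: "p \<in> bdry \<phi> k \<Longrightarrow> meridian \<phi> k e p t \<in> bdry \<phi> k"
  using meridian_lift_in[of p e t] unfolding meridian_eq bdry_def by auto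

lemma meridian_neg:
  assumes "\<bar>e\<bar> = 1"
  shows "meridian \<phi> k (-e) p = reversepath (meridian \<phi> k e p)"
proof
  fix t
  have "complex_of_real (2*pi*e*(1-t)) * \<i> = complex_of_real (2*pi*e) * \<i> + complex_of_real (2*pi*(-e)*t) * \<i>"
    by (simp add: algebra_simps)
  then have "exp (complex_of_real (2*pi*e*(1-t)) * \<i>) = exp (complex_of_real (2*pi*(-e)*t) * \<i>)"
    by (simp only: exp_add exp_two_pi_sign[OF assms] mult_1)
  then show "meridian \<phi> k (-e) p t = reversepath (meridian \<phi> k e p) t"
    unfolding reversepath_def meridian_eq meridian_lift_def by (simp split: prod.splits)
qed

lemma path_meridian:
  assumes "\<bar>e\<bar> = 1" "p \<in> bdry \<phi> k"
  shows "path (meridian \<phi> k e p)" "path_image (meridian \<phi> k e p) \<subseteq> bdry \<phi> k"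
    "pathstart (meridian \<phi> k e p) = p" "pathfinish (meridian \<phi> k e p) = p"
proof -
  show "path (meridian \<phi> k e p)" unfolding path_def
    by (rule continuous_on_compose2[OF continuous_on_meridian, of _ "\<lambda>t. (p,t)", simplified])
       (use assms in \<open>auto intro!: continuous_intros\<close>)
  show "path_image (meridian \<phi> k e p) \<subseteq> bdry \<phi> k"
    using meridian_in_bdry assms by (auto simp: path_image_def)
  show "pathstart (meridian \<phi> k e p) = p" "pathfinish (meridian \<phi> k e p) = p"
    using meridian_start meridian_finish assms by (auto simp: pathstart_def pathfinish_def)
qed

lemma nbhd_coord_in: "x \<in> nbhd \<phi> k \<Longrightarrow> nbhd_coord x \<in> tor_dom k"
  unfolding nbhd_def nbhd_coord_def by (rule inv_into_into)

lemma phi_nbhd_coord: "x \<in> nbhd \<phi> k \<Longrightarrow> \<phi> (nbhd_coord x) = x"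
  unfolding nbhd_def nbhd_coord_def by (rule f_inv_into_f)

lemma open_tor_chart_image:
  fixes i :: nat
  assumes V: "openin (top_of_set S3) V" "V \<subseteq> nbhd \<phi> k" and u0: "norm u0 = 1" and w0: "norm w0 = 1"
  defines "U \<equiv> V \<inter> nbhd_coord -` ({i} \<times> {u. 0 < Re (u * cnj u0)} \<times> UNIV)"
  shows "open ((tor_chart u0 w0 \<circ> nbhd_coord) ` U)"
proof -
  have cont: "continuous_on V nbhd_coord"
    using continuous_on_subset[OF continuous_on_nbhd_coord V(2)] .
  have "openin (top_of_set V) U"
    unfolding U_def
    by (rule continuous_openin_preimage_gen[OF cont])
       (intro open_Times open_discrete open_Collect_less continuous_intros; simp)
  then have "openin (top_of_set (sphere 0 1)) U"
    using V(1) unfolding S3_def by (rule openin_trans)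
  moreover have "continuous_on U (tor_chart u0 w0 \<circ> nbhd_coord)"
    unfolding tor_chart_def case_prod_beta
    by (intro continuous_intros continuous_on_subset[OF cont]) (auto simp: U_def)
  moreover have "inj_on (tor_chart u0 w0 \<circ> nbhd_coord) U"
  proof (rule comp_inj_on)
    show "inj_on nbhd_coord U"
      using phi_nbhd_coord V(2) by (metis (no_types, lifting) IntE U_def inj_on_inverseI subsetD)
    have "nbhd_coord ` U \<subseteq> {(j,u,w). j = i \<and> norm u = 1 \<and> 0 < Re (u * cnj u0)}"
      using nbhd_coord_in V(2) by (fastforce simp: U_def tor_dom_def)
    then show "inj_on (tor_chart u0 w0) (nbhd_coord ` U)"
      using inj_on_tor_chart[OF u0 w0] inj_on_subset by blast
  qed
  ultimately show ?thesis
    using invariance_of_domain_sphere_affine_set[of U "tor_chart u0 w0 \<circ> nbhd_coord" UNIV 1 0] by auto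
qed

text \<open>Near a boundary point \<open>p\<close>, the solid torus lies on one side of the image of \<open>p\<close> under
  \<^const>\<open>tor_chart\<close>, whereas a neighbourhood of \<open>p\<close> in \<open>S\<^sup>3\<close> contained in \<open>N\<^sub>L\<close> would map onto
  an open set around that image.\<close>
lemma bdry_subset_ext: "bdry \<phi> k \<subseteq> ext \<phi> k"
proof
  fix p assume "p \<in> bdry \<phi> k"
  then obtain i u0 w0 where p: "p = \<phi> (i,u0,w0)" and pb: "(i,u0,w0) \<in> tor_bdry k"
    unfolding bdry_def by auto
  then have pd: "(i,u0,w0) \<in> tor_dom k" and u0: "norm u0 = 1" and w0: "norm w0 = 1"
    using tor_bdry_subset_dom by (auto simp: tor_bdry_def)
  have coord_p: "nbhd_coord p = (i,u0,w0)"
    unfolding nbhd_coord_def p using inv_into_f_f[OF tube_inj pd] .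
  show "p \<in> ext \<phi> k"
  proof (rule ccontr)
    assume "p \<notin> ext \<phi> k"
    then obtain r where "r > 0" and "\<forall>y\<in>S3 - nbhd \<phi> k. \<not> dist y p < r"
      unfolding ext_def closure_approachable by auto
    then have V: "S3 \<inter> ball p r \<subseteq> nbhd \<phi> k" by (auto simp: dist_commute)
    define U where "U = S3 \<inter> ball p r \<inter> nbhd_coord -` ({i} \<times> {u. 0 < Re (u * cnj u0)} \<times> UNIV)"
    define f where "f = tor_chart u0 w0 \<circ> nbhd_coord"
    have "open (f ` U)"
      unfolding f_def U_def by (rule open_tor_chart_image[OF openin_open_Int[OF open_ball] V u0 w0])
    moreover have "p \<in> U"
    proof -
      have "Re (u0 * cnj u0) = 1" using u0 by (simp flip: complex_norm_square)
      then show ?thesis using pd p tube_S3 \<open>r > 0\<close> coord_p by (auto simp: U_def)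
    qed
    ultimately obtain y where "y \<in> f ` U" and "snd (snd (f p)) < snd (snd y)"
      by (blast intro: open_exceeds_last_coordinate)
    moreover have "snd (snd (f p)) = 1"
    proof -
      have "w0 * cnj w0 = 1" using w0 by (simp flip: complex_norm_square)
      then show ?thesis
        unfolding f_def comp_def coord_p tor_chart_def by (simp only: prod.case snd_conv) simp
    qed
    moreover have "snd (snd (f x)) \<le> 1" if "x \<in> U" for x
    proof -
      have "x \<in> nbhd \<phi> k" using that V by (auto simp: U_def)
      then show ?thesis unfolding f_def comp_def by (intro tor_chart_le_one[OF nbhd_coord_in w0])
    qed
    ultimately show False by fastforce
  qed
qed


lemma arcsD:
  assumes "(a0,a1) \<in> arcs \<phi> k z0 z1"
  shows "path a0" "path a1" "path_image a0 \<subseteq> ext \<phi> k" "path_image a1 \<subseteq> ext \<phi> k"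
    "pathstart a0 \<in> bdry \<phi> k" "pathstart a1 = pathstart a0" "pathfinish a0 = z0" "pathfinish a1 = z1"
  using assms unfolding arcs_def by auto

lemma arc_rel_arcs: "(x,y) \<in> arc_rel \<phi> k z0 z1 \<Longrightarrow> x \<in> arcs \<phi> k z0 z1 \<and> y \<in> arcs \<phi> k z0 z1"
  unfolding arc_rel_def by auto

lemma arc_rel_refl:
  assumes "x \<in> arcs \<phi> k z0 z1"
  shows "(x,x) \<in> arc_rel \<phi> k z0 z1"
proof -
  obtain a0 a1 where x: "x = (a0,a1)" by force
  note A = arcsD[OF assms[unfolded x]]
  have "path (reversepath a0 +++ a1)" using A by (auto intro!: path_join_imp)
  moreover have "path_image (reversepath a0 +++ a1) \<subseteq> ext \<phi> k" using A
    by (metis path_image_reversepath pathfinish_reversepath subset_path_image_join)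
  moreover have "(reversepath a0 +++ a1) 0 = z0 \<and> (reversepath a0 +++ a1) 1 = z1 \<and>
      (reversepath a0 +++ a1) (1/2::real) \<in> bdry \<phi> k"
    using A by (auto simp: joinpaths_def reversepath_def pathstart_def pathfinish_def)
  ultimately have "homotopic_with_canon (\<lambda>r. r 0 = z0 \<and> r 1 = z1 \<and> r (1/2::real) \<in> bdry \<phi> k)
      {0..1} (ext \<phi> k) (reversepath a0 +++ a1) (reversepath a0 +++ a1)"
    by (simp add: homotopic_with_refl path_def path_image_def continuous_map_subtopology_eu
        image_subset_iff_funcset)
  then show ?thesis using assms unfolding x arc_rel_def by auto
qed

lemma equiv_arc_rel: "equiv (arcs \<phi> k z0 z1) (arc_rel \<phi> k z0 z1)"
proof (rule equivI)
  show "arc_rel \<phi> k z0 z1 \<subseteq> arcs \<phi> k z0 z1 \<times> arcs \<phi> k z0 z1"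
    using arc_rel_arcs by auto
  show "refl_on (arcs \<phi> k z0 z1) (arc_rel \<phi> k z0 z1)"
    unfolding refl_on_def using arc_rel_refl arc_rel_arcs by auto
  show "sym (arc_rel \<phi> k z0 z1)"
    unfolding sym_def arc_rel_def by (auto intro: homotopic_with_symD)
  show "trans (arc_rel \<phi> k z0 z1)"
    unfolding trans_def arc_rel_def by (auto intro: homotopic_with_trans)
qed

lemma arc_rel_trans:
  "(x,y) \<in> arc_rel \<phi> k z0 z1 \<Longrightarrow> (y,w) \<in> arc_rel \<phi> k z0 z1 \<Longrightarrow> (x,w) \<in> arc_rel \<phi> k z0 z1"
  using equiv_arc_rel[of z0 z1] unfolding equiv_def trans_def by blast

definition twist :: "real \<Rightarrow> (real \<Rightarrow> real^4) \<Rightarrow> real \<Rightarrow> real^4" where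
  "twist e \<gamma> = reversepath \<gamma> +++ meridian \<phi> k e (pathstart \<gamma>) +++ \<gamma>"

lemma up_rep_twist: "up_rep \<phi> k e x y = (fst x +++ twist e (fst y), snd x)"
  by (simp add: up_rep_def twist_def)

lemma twist_cong:
  assumes "\<forall>t\<in>{0..1}. \<gamma> t = \<gamma>' t" "t \<in> {0..1}"
  shows "twist e \<gamma> t = twist e \<gamma>' t"
  using assms by (auto simp: twist_def joinpaths_def reversepath_def pathstart_def)

lemma path_twist:
  assumes e: "\<bar>e\<bar> = 1" and "path \<gamma>" "path_image \<gamma> \<subseteq> ext \<phi> k" "pathstart \<gamma> \<in> bdry \<phi> k"
  shows "path (twist e \<gamma>)" "path_image (twist e \<gamma>) \<subseteq> ext \<phi> k"
    "pathstart (twist e \<gamma>) = pathfinish \<gamma>" "pathfinish (twist e \<gamma>) = pathfinish \<gamma>"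
  using assms path_meridian[OF e assms(4)] bdry_subset_ext
  by (auto simp: twist_def path_image_join intro!: path_join_imp)

lemma continuous_on_twist_family:
  assumes L: "continuous_on unit_square L" and L0: "\<And>s. s \<in> {0..1} \<Longrightarrow> L (s,0) \<in> bdry \<phi> k"
    and e: "\<bar>e\<bar> = 1"
  shows "continuous_on unit_square (\<lambda>y. twist e (\<lambda>t. L (fst y, t)) (snd y))"
proof -
  let ?m = "\<lambda>s. meridian \<phi> k e (L (s,0))"
  have "continuous_on unit_square (\<lambda>y. L (fst y, 0))"
    by (rule continuous_on_compose2[OF L, of _ "\<lambda>y. (fst y, 0)", simplified])
       (auto intro!: continuous_intros)
  then have cm: "continuous_on unit_square (\<lambda>y. ?m (fst y) (snd y))"
    by (intro continuous_on_compose2[OF continuous_on_meridian, of _ "\<lambda>y. (L (fst y, 0), snd y)",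
          simplified] continuous_intros) (use L0 in auto)
  have "continuous_on unit_square (\<lambda>y. (?m (fst y) +++ (\<lambda>t. L (fst y, t))) (snd y))"
    by (rule continuous_on_homotopic_join_lemma[OF cm])
       (use L L0 meridian_finish[OF e] in \<open>auto simp: pathfinish_def pathstart_def\<close>)
  then show ?thesis
    unfolding twist_def
    by (intro continuous_on_homotopic_join_lemma[of "\<lambda>s. reversepath (\<lambda>t. L (s,t))", simplified]
          continuous_on_reversepath_family[OF L])
       (use L0 meridian_start in \<open>auto simp: pathfinish_def pathstart_def reversepath_def joinpaths_def\<close>)
qed

lemma homotopic_twist:
  assumes e: "\<bar>e\<bar> = 1" and r: "((y0,y1),(y0',y1')) \<in> arc_rel \<phi> k z0 z1"
  shows "homotopic_paths (ext \<phi> k) (twist e y0) (twist e y0')"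
proof -
  obtain L R where "arc_pair_homotopy (ext \<phi> k) (bdry \<phi> k) z0 z1 L R y0 y1 y0' y1'"
    using r by (rule arc_rel_imp_arc_pair_homotopy)
  note D = arc_pair_homotopyD[OF this]
  have y0: "pathfinish y0 = z0" using arc_rel_arcs[OF r] arcsD(7) by blast
  have slice: "path (\<lambda>t. L (s,t))" "path_image (\<lambda>t. L (s,t)) \<subseteq> ext \<phi> k"
    "pathstart (\<lambda>t. L (s,t)) \<in> bdry \<phi> k" "pathfinish (\<lambda>t. L (s,t)) = z0" if "s \<in> {0..1}" for s
    using continuous_on_slice[OF D(1) that] D(3,10,11) that
    by (auto simp: path_def path_image_def pathstart_def pathfinish_def Pi_iff)
  show ?thesis unfolding homotopic_paths_iff_map
  proof (intro exI[of _ "\<lambda>y. twist e (\<lambda>t. L (fst y, t)) (snd y)"] conjI ballI)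
    show "continuous_on unit_square (\<lambda>y. twist e (\<lambda>t. L (fst y, t)) (snd y))"
      using continuous_on_twist_family[OF D(1) D(10) e] .
    show "(\<lambda>y. twist e (\<lambda>t. L (fst y, t)) (snd y)) \<in> unit_square \<rightarrow> ext \<phi> k"
      using path_twist(2)[OF e slice(1-3)] by (auto simp: path_image_def image_subset_iff)
  next
    fix x :: real assume "x \<in> {0..1}"
    then show "twist e (\<lambda>t. L (fst (0,x), t)) (snd (0,x)) = twist e y0 x"
      "twist e (\<lambda>t. L (fst (1,x), t)) (snd (1,x)) = twist e y0' x"
      using D(5,6) by (auto intro: twist_cong)
  next
    fix s :: real assume "s \<in> {0..1}"
    then show "twist e (\<lambda>t. L (fst (s,0), t)) (snd (s,0)) = twist e y0 0"
      "twist e (\<lambda>t. L (fst (s,1), t)) (snd (s,1)) = twist e y0 1"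
      using D(11) y0 by (auto simp: twist_def joinpaths_def reversepath_def pathfinish_def)
  qed
qed

lemma arc_rel_append_loop:
  assumes r: "((x0,x1),(x0',x1')) \<in> arc_rel \<phi> k z0 z1"
    and \<beta>: "path \<beta>" "path_image \<beta> \<subseteq> ext \<phi> k" "pathstart \<beta> = z0" "pathfinish \<beta> = z0"
  shows "((x0 +++ \<beta>, x1), (x0' +++ \<beta>, x1')) \<in> arc_rel \<phi> k z0 z1"
proof -
  obtain L R where "arc_pair_homotopy (ext \<phi> k) (bdry \<phi> k) z0 z1 L R x0 x1 x0' x1'"
    using r by (rule arc_rel_imp_arc_pair_homotopy)
  note D = arc_pair_homotopyD[OF this]
  define L' where "L' = (\<lambda>y. ((\<lambda>s t. L (s,t)) (fst y) +++ (\<lambda>s. \<beta>) (fst y)) (snd y))"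
  have "arc_pair_homotopy (ext \<phi> k) (bdry \<phi> k) z0 z1 L' R (x0 +++ \<beta>) x1 (x0' +++ \<beta>) x1'"
    unfolding arc_pair_homotopy_def
  proof (intro conjI ballI D(2) D(4))
    show "continuous_on unit_square L'" unfolding L'_def
      by (rule continuous_on_homotopic_join_lemma)
         (use D(1,11) \<beta>(3) continuous_on_path_snd[OF \<beta>(1)] in
           \<open>auto simp: pathfinish_def\<close>)
    show "L' \<in> unit_square \<rightarrow> ext \<phi> k"
      using D(3) \<beta>(2) by (auto simp: L'_def joinpaths_def Pi_iff path_image_def)
  next
    fix t :: real assume "t \<in> {0..1}"
    then show "L' (0,t) = (x0 +++ \<beta>) t" "L' (1,t) = (x0' +++ \<beta>) t" "R (0,t) = x1 t" "R (1,t) = x1' t"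
      using D(5-8) by (auto simp: L'_def joinpaths_def)
  next
    fix s :: real assume "s \<in> {0..1}"
    then show "L' (s,0) = R (s,0)" "L' (s,0) \<in> bdry \<phi> k" "L' (s,1) = z0" "R (s,1) = z1"
      using D(9-12) \<beta>(4) by (auto simp: L'_def joinpaths_def pathfinish_def)
  qed
  then show ?thesis by (rule arc_pair_homotopy_imp_arc_rel)
qed

lemma arc_rel_homotopic_fst:
  assumes h: "homotopic_paths (ext \<phi> k) p q" and a: "(q,x1) \<in> arcs \<phi> k z0 z1"
  shows "((p,x1),(q,x1)) \<in> arc_rel \<phi> k z0 z1"
proof -
  obtain H where hc: "continuous_on unit_square H" and hi: "H \<in> unit_square \<rightarrow> ext \<phi> k"
    and h0: "\<forall>x\<in>{0..1}. H (0,x) = p x" and h1: "\<forall>x\<in>{0..1}. H (1,x) = q x"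
    and ends: "\<forall>t\<in>{0..1::real}. H (t,0) = p 0 \<and> H (t,1) = p 1"
    using h unfolding homotopic_paths_iff_map by blast
  have "p 0 = q 0" "p 1 = q 1"
    using homotopic_paths_imp_pathstart[OF h] homotopic_paths_imp_pathfinish[OF h]
    by (auto simp: pathstart_def pathfinish_def)
  moreover note A = arcsD[OF a]
  ultimately have "arc_pair_homotopy (ext \<phi> k) (bdry \<phi> k) z0 z1 H (\<lambda>y. x1 (snd y)) p x1 q x1"
    unfolding arc_pair_homotopy_def using hc hi h0 h1 ends continuous_on_path_snd[OF A(2)]
    by (auto simp: pathstart_def pathfinish_def path_image_def Pi_iff)
  then show ?thesis by (rule arc_pair_homotopy_imp_arc_rel)
qed

lemma up_rep_respects:
  assumes e: "\<bar>e\<bar> = 1" and rx: "(x,x') \<in> arc_rel \<phi> k z0 z1" and ry: "(y,y') \<in> arc_rel \<phi> k z0 z1"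
  shows "(up_rep \<phi> k e x y, up_rep \<phi> k e x' y') \<in> arc_rel \<phi> k z0 z1"
proof -
  obtain x0 x1 x0' x1' y0 y1 y0' y1'
    where xy: "x = (x0,x1)" "x' = (x0',x1')" "y = (y0,y1)" "y' = (y0',y1')"
    by (metis prod.exhaust)
  have "(x0',x1') \<in> arcs \<phi> k z0 z1" "(y0,y1) \<in> arcs \<phi> k z0 z1" "(y0',y1') \<in> arcs \<phi> k z0 z1"
    using rx ry arc_rel_arcs xy by auto
  note X' = arcsD[OF this(1)] and Y = arcsD[OF this(2)] and Y' = arcsD[OF this(3)]
  note T = path_twist[OF e Y(1,3,5), unfolded Y(7)]
    and T' = path_twist[OF e Y'(1,3,5), unfolded Y'(7)]
  have "((x0 +++ twist e y0, x1), (x0' +++ twist e y0, x1')) \<in> arc_rel \<phi> k z0 z1"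
    using arc_rel_append_loop[OF rx[unfolded xy] T] .
  moreover have "homotopic_paths (ext \<phi> k) (x0' +++ twist e y0) (x0' +++ twist e y0')"
    by (rule homotopic_paths_join)
       (use X' T homotopic_twist[OF e ry[unfolded xy]] in \<open>auto simp: homotopic_paths_refl\<close>)
  then have "((x0' +++ twist e y0, x1'), (x0' +++ twist e y0', x1')) \<in> arc_rel \<phi> k z0 z1"
    using arc_rel_homotopic_fst arc_rel_append_loop[OF arc_rel_refl[OF \<open>(x0',x1') \<in> _\<close>] T']
      arc_rel_arcs by fastforce
  ultimately show ?thesis unfolding up_rep_twist xy by (auto intro: arc_rel_trans)
qed

lemma down_rep_respects:
  assumes e: "\<bar>e\<bar> = 1" and rx: "(x,x') \<in> arc_rel \<phi> k z0 z1" and ry: "(y,y') \<in> arc_rel \<phi> k z0 z1"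
  shows "(down_rep \<phi> k e x y, down_rep \<phi> k e x' y') \<in> arc_rel \<phi> k z0 z1"
  using arc_rel_swap[OF up_rep_respects[OF e arc_rel_swap[OF rx] arc_rel_swap[OF ry]]]
  unfolding down_rep_swap by simp

lemma up_rep_cancel:
  assumes e: "\<bar>e\<bar> = 1" and x: "x \<in> arcs \<phi> k z0 z1" and y: "y \<in> arcs \<phi> k z0 z1"
  shows "(up_rep \<phi> k (-e) (up_rep \<phi> k e x y) y, x) \<in> arc_rel \<phi> k z0 z1"
proof -
  obtain x0 x1 y0 y1 where xy: "x = (x0,x1)" "y = (y0,y1)" by (metis prod.exhaust)
  note X = arcsD[OF x[unfolded xy(1)]] and Y = arcsD[OF y[unfolded xy(2)]]
  let ?m = "meridian \<phi> k e (pathstart y0)" and ?b = "twist e y0"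
  note M = path_meridian[OF e Y(5)]
  note T = path_twist[OF e Y(1,3,5), unfolded Y(7)]
  have "\<bar>-e\<bar> = 1" using e by simp
  note T' = path_twist[OF this Y(1,3,5), unfolded Y(7)]
  have "twist (-e) y0 = reversepath y0 +++ (reversepath ?m +++ y0)"
    unfolding twist_def meridian_neg[OF e] ..
  moreover have "reversepath ?b = (reversepath y0 +++ reversepath ?m) +++ y0"
    unfolding twist_def using M Y by (simp add: reversepath_joinpaths)
  ultimately have inv: "homotopic_paths (ext \<phi> k) (twist (-e) y0) (reversepath ?b)"
    using M Y bdry_subset_ext by (auto intro!: homotopic_paths_assoc)
  have "homotopic_paths (ext \<phi> k) ((x0 +++ ?b) +++ twist (-e) y0) ((x0 +++ ?b) +++ reversepath ?b)"
    by (rule homotopic_paths_join)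
       (use X Y T T' inv in \<open>auto simp: homotopic_paths_refl path_image_join intro!: path_join_imp\<close>)
  also have "homotopic_paths (ext \<phi> k) \<dots> (x0 +++ (?b +++ reversepath ?b))"
    by (rule homotopic_paths_sym, rule homotopic_paths_assoc) (use X Y T in auto)
  also have "homotopic_paths (ext \<phi> k) \<dots> (x0 +++ linepath z0 z0)"
    by (rule homotopic_paths_join)
       (use X Y T homotopic_paths_rinv[of ?b "ext \<phi> k"] in \<open>auto simp: homotopic_paths_refl\<close>)
  also have "homotopic_paths (ext \<phi> k) \<dots> x0"
    using homotopic_paths_rid[of x0 "ext \<phi> k"] X by simp
  finally have "homotopic_paths (ext \<phi> k) ((x0 +++ ?b) +++ twist (-e) y0) x0" .
  from arc_rel_homotopic_fst[OF this] show ?thesis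
    using x unfolding up_rep_twist xy by simp
qed

lemma down_rep_cancel:
  assumes e: "\<bar>e\<bar> = 1" and x: "x \<in> arcs \<phi> k z0 z1" and y: "y \<in> arcs \<phi> k z0 z1"
  shows "(down_rep \<phi> k (-e) (down_rep \<phi> k e x y) y, x) \<in> arc_rel \<phi> k z0 z1"
  using arc_rel_swap[OF up_rep_cancel[OF e arcs_swap[OF x] arcs_swap[OF y]]]
  unfolding down_rep_swap by simp

lemma biq_class:
  assumes "X \<in> biq \<phi> k z0 z1" "x \<in> X"
  shows "x \<in> arcs \<phi> k z0 z1" "X = arc_rel \<phi> k z0 z1 `` {x}"
proof -
  obtain a where a: "a \<in> arcs \<phi> k z0 z1" "X = arc_rel \<phi> k z0 z1 `` {a}"
    using assms(1) unfolding biq_def by (auto elim!: quotientE)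
  then have "(a,x) \<in> arc_rel \<phi> k z0 z1" using assms(2) by auto
  then show "x \<in> arcs \<phi> k z0 z1" "X = arc_rel \<phi> k z0 z1 `` {x}"
    using arc_rel_arcs a(2) equiv_class_eq[OF equiv_arc_rel] by auto
qed

lemma some_in_biq: "X \<in> biq \<phi> k z0 z1 \<Longrightarrow> (SOME x. x \<in> X) \<in> X"
  unfolding biq_def by (metis equiv_arc_rel in_quotient_imp_non_empty some_in_eq)

lemma class_respecting_op:
  assumes resp: "\<And>x x' y y'. (x,x') \<in> arc_rel \<phi> k z0 z1 \<Longrightarrow> (y,y') \<in> arc_rel \<phi> k z0 z1 \<Longrightarrow>
      (f x y, f x' y') \<in> arc_rel \<phi> k z0 z1"
    and X: "X \<in> biq \<phi> k z0 z1" "x \<in> X" and Y: "Y \<in> biq \<phi> k z0 z1" "y \<in> Y"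
  shows "arc_rel \<phi> k z0 z1 `` {f (SOME x. x \<in> X) (SOME y. y \<in> Y)} = arc_rel \<phi> k z0 z1 `` {f x y}"
    "arc_rel \<phi> k z0 z1 `` {f x y} \<in> biq \<phi> k z0 z1" "f x y \<in> arc_rel \<phi> k z0 z1 `` {f x y}"
proof -
  have "(x, SOME x. x \<in> X) \<in> arc_rel \<phi> k z0 z1" "(y, SOME y. y \<in> Y) \<in> arc_rel \<phi> k z0 z1"
    using biq_class(2)[OF X] biq_class(2)[OF Y] some_in_biq[OF X(1)] some_in_biq[OF Y(1)] by auto
  then have r: "(f x y, f (SOME x. x \<in> X) (SOME y. y \<in> Y)) \<in> arc_rel \<phi> k z0 z1"
    by (rule resp)
  then show "arc_rel \<phi> k z0 z1 `` {f (SOME x. x \<in> X) (SOME y. y \<in> Y)} = arc_rel \<phi> k z0 z1 `` {f x y}"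
    using equiv_class_eq[OF equiv_arc_rel] by simp
  have "f x y \<in> arcs \<phi> k z0 z1" using r arc_rel_arcs by blast
  then show "arc_rel \<phi> k z0 z1 `` {f x y} \<in> biq \<phi> k z0 z1" "f x y \<in> arc_rel \<phi> k z0 z1 `` {f x y}"
    unfolding biq_def using quotientI equiv_class_self[OF equiv_arc_rel] by auto
qed

lemma bq_up_class:
  assumes "\<bar>e\<bar> = 1" "X \<in> biq \<phi> k z0 z1" "x \<in> X" "Y \<in> biq \<phi> k z0 z1" "y \<in> Y"
  shows "bq_up \<phi> k e z0 z1 X Y = arc_rel \<phi> k z0 z1 `` {up_rep \<phi> k e x y}"
    "bq_up \<phi> k e z0 z1 X Y \<in> biq \<phi> k z0 z1" "up_rep \<phi> k e x y \<in> bq_up \<phi> k e z0 z1 X Y"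
  using class_respecting_op[where f = "up_rep \<phi> k e", OF up_rep_respects[OF assms(1)] assms(2-)] unfolding bq_up_def by auto

lemma bq_down_class:
  assumes "\<bar>e\<bar> = 1" "X \<in> biq \<phi> k z0 z1" "x \<in> X" "Y \<in> biq \<phi> k z0 z1" "y \<in> Y"
  shows "bq_down \<phi> k e z0 z1 X Y = arc_rel \<phi> k z0 z1 `` {down_rep \<phi> k e x y}"
    "bq_down \<phi> k e z0 z1 X Y \<in> biq \<phi> k z0 z1" "down_rep \<phi> k e x y \<in> bq_down \<phi> k e z0 z1 X Y"
  using class_respecting_op[where f = "down_rep \<phi> k e", OF down_rep_respects[OF assms(1)] assms(2-)] unfolding bq_down_def by auto

lemma bq_up_in_biq:
  "\<bar>e\<bar> = 1 \<Longrightarrow> X \<in> biq \<phi> k z0 z1 \<Longrightarrow> Y \<in> biq \<phi> k z0 z1 \<Longrightarrow> bq_up \<phi> k e z0 z1 X Y \<in> biq \<phi> k z0 z1"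
  using bq_up_class(2) some_in_biq by blast

lemma bq_down_in_biq:
  "\<bar>e\<bar> = 1 \<Longrightarrow> X \<in> biq \<phi> k z0 z1 \<Longrightarrow> Y \<in> biq \<phi> k z0 z1 \<Longrightarrow> bq_down \<phi> k e z0 z1 X Y \<in> biq \<phi> k z0 z1"
  using bq_down_class(2) some_in_biq by blast

lemma bq_up_down_commute:
  assumes e: "\<bar>e\<bar> = 1" "\<bar>e'\<bar> = 1" and abc: "a \<in> biq \<phi> k z0 z1" "b \<in> biq \<phi> k z0 z1" "c \<in> biq \<phi> k z0 z1"
  shows "bq_down \<phi> k e' z0 z1 (bq_up \<phi> k e z0 z1 a b) c = bq_up \<phi> k e z0 z1 (bq_down \<phi> k e' z0 z1 a c) b"
proof -
  obtain x y w where "x \<in> a" "y \<in> b" "w \<in> c" using some_in_biq abc by blast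
  note U = bq_up_class[OF e(1) abc(1) \<open>x \<in> a\<close> abc(2) \<open>y \<in> b\<close>]
    and D = bq_down_class[OF e(2) abc(1) \<open>x \<in> a\<close> abc(3) \<open>w \<in> c\<close>]
  show ?thesis
    unfolding bq_down_class(1)[OF e(2) U(2,3) abc(3) \<open>w \<in> c\<close>]
      bq_up_class(1)[OF e(1) D(2,3) abc(2) \<open>y \<in> b\<close>]
    by (simp add: up_rep_def down_rep_def)
qed

lemma bq_up_down_absorb:
  assumes e: "\<bar>e\<bar> = 1" "\<bar>e'\<bar> = 1" and abc: "a \<in> biq \<phi> k z0 z1" "b \<in> biq \<phi> k z0 z1" "c \<in> biq \<phi> k z0 z1"
  shows "bq_up \<phi> k e z0 z1 a (bq_down \<phi> k e' z0 z1 b c) = bq_up \<phi> k e z0 z1 a b"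
proof -
  obtain x y w where "x \<in> a" "y \<in> b" "w \<in> c" using some_in_biq abc by blast
  note D = bq_down_class[OF e(2) abc(2) \<open>y \<in> b\<close> abc(3) \<open>w \<in> c\<close>]
  show ?thesis
    unfolding bq_up_class(1)[OF e(1) abc(1) \<open>x \<in> a\<close> D(2,3)]
      bq_up_class(1)[OF e(1) abc(1) \<open>x \<in> a\<close> abc(2) \<open>y \<in> b\<close>]
    by (simp add: up_rep_def down_rep_def)
qed

lemma bq_down_up_absorb:
  assumes e: "\<bar>e\<bar> = 1" "\<bar>e'\<bar> = 1" and abc: "a \<in> biq \<phi> k z0 z1" "b \<in> biq \<phi> k z0 z1" "c \<in> biq \<phi> k z0 z1"
  shows "bq_down \<phi> k e z0 z1 a (bq_up \<phi> k e' z0 z1 b c) = bq_down \<phi> k e z0 z1 a b"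
proof -
  obtain x y w where "x \<in> a" "y \<in> b" "w \<in> c" using some_in_biq abc by blast
  note U = bq_up_class[OF e(2) abc(2) \<open>y \<in> b\<close> abc(3) \<open>w \<in> c\<close>]
  show ?thesis
    unfolding bq_down_class(1)[OF e(1) abc(1) \<open>x \<in> a\<close> U(2,3)]
      bq_down_class(1)[OF e(1) abc(1) \<open>x \<in> a\<close> abc(2) \<open>y \<in> b\<close>]
    by (simp add: up_rep_def down_rep_def)
qed

lemma bq_up_cancel:
  assumes e: "\<bar>e\<bar> = 1" and ab: "a \<in> biq \<phi> k z0 z1" "b \<in> biq \<phi> k z0 z1"
  shows "bq_up \<phi> k (-e) z0 z1 (bq_up \<phi> k e z0 z1 a b) b = a"
proof -
  obtain x y where "x \<in> a" "y \<in> b" using some_in_biq ab by blast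
  note U = bq_up_class[OF e ab(1) \<open>x \<in> a\<close> ab(2) \<open>y \<in> b\<close>]
  have "\<bar>-e\<bar> = 1" using e by simp
  from bq_up_class(1)[OF this U(2,3) ab(2) \<open>y \<in> b\<close>]
  show ?thesis
    using up_rep_cancel[OF e biq_class(1)[OF ab(1) \<open>x \<in> a\<close>] biq_class(1)[OF ab(2) \<open>y \<in> b\<close>]]
      equiv_class_eq[OF equiv_arc_rel] biq_class(2)[OF ab(1) \<open>x \<in> a\<close>] by simp
qed

lemma bq_down_cancel:
  assumes e: "\<bar>e\<bar> = 1" and ab: "a \<in> biq \<phi> k z0 z1" "b \<in> biq \<phi> k z0 z1"
  shows "bq_down \<phi> k (-e) z0 z1 (bq_down \<phi> k e z0 z1 a b) b = a"
proof -
  obtain x y where "x \<in> a" "y \<in> b" using some_in_biq ab by blast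
  note D = bq_down_class[OF e ab(1) \<open>x \<in> a\<close> ab(2) \<open>y \<in> b\<close>]
  have "\<bar>-e\<bar> = 1" using e by simp
  from bq_down_class(1)[OF this D(2,3) ab(2) \<open>y \<in> b\<close>]
  show ?thesis
    using down_rep_cancel[OF e biq_class(1)[OF ab(1) \<open>x \<in> a\<close>] biq_class(1)[OF ab(2) \<open>y \<in> b\<close>]]
      equiv_class_eq[OF equiv_arc_rel] biq_class(2)[OF ab(1) \<open>x \<in> a\<close>] by simp
qed

lemma bq_Sinv_eq:
  assumes e: "\<bar>e\<bar> = 1" and ab: "a \<in> biq \<phi> k z0 z1" "b \<in> biq \<phi> k z0 z1"
  shows "bq_Sinv \<phi> k e z0 z1 (a,b) = (bq_up \<phi> k (-e) z0 z1 b a, bq_down \<phi> k (-e) z0 z1 a b)"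
  unfolding bq_Sinv_def
proof (rule the_equality)
  have e': "\<bar>-e\<bar> = 1" using e by simp
  note facts = ab e e' bq_up_in_biq bq_down_in_biq bq_up_down_absorb bq_down_up_absorb
    bq_up_cancel bq_down_cancel bq_up_cancel[of "-e", simplified] bq_down_cancel[of "-e", simplified]
  show "(bq_up \<phi> k (-e) z0 z1 b a, bq_down \<phi> k (-e) z0 z1 a b) \<in> biq \<phi> k z0 z1 \<times> biq \<phi> k z0 z1 \<and>
      bq_S \<phi> k e z0 z1 (bq_up \<phi> k (-e) z0 z1 b a, bq_down \<phi> k (-e) z0 z1 a b) = (a, b)"
    by (simp add: bq_S_def facts)
  fix p assume p: "p \<in> biq \<phi> k z0 z1 \<times> biq \<phi> k z0 z1 \<and> bq_S \<phi> k e z0 z1 p = (a, b)"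
  then obtain p1 p2 where "p = (p1,p2)" "p1 \<in> biq \<phi> k z0 z1" "p2 \<in> biq \<phi> k z0 z1"
    "a = bq_down \<phi> k e z0 z1 p2 p1" "b = bq_up \<phi> k e z0 z1 p1 p2"
    unfolding bq_S_def by auto
  then show "p = (bq_up \<phi> k (-e) z0 z1 b a, bq_down \<phi> k (-e) z0 z1 a b)"
    by (simp add: facts)
qed

lemma bq_Up_eq:
  "\<bar>e\<bar> = 1 \<Longrightarrow> a \<in> biq \<phi> k z0 z1 \<Longrightarrow> b \<in> biq \<phi> k z0 z1 \<Longrightarrow>
     bq_Up \<phi> k e z0 z1 a b = bq_up \<phi> k (-e) z0 z1 a b"
  unfolding bq_Up_def by (simp add: bq_Sinv_eq)

lemma bq_Down_eq:
  "\<bar>e\<bar> = 1 \<Longrightarrow> a \<in> biq \<phi> k z0 z1 \<Longrightarrow> b \<in> biq \<phi> k z0 z1 \<Longrightarrow>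
     bq_Down \<phi> k e z0 z1 a b = bq_down \<phi> k (-e) z0 z1 a b"
  unfolding bq_Down_def by (simp add: bq_Sinv_eq)

end

theorem mainTheorem7:
  fixes \<phi> :: "nat \<times> complex \<times> complex \<Rightarrow> real^4" and k :: nat and \<epsilon> :: real
    and h :: "real^3 \<Rightarrow> real^4" and v :: "real^3" and z0 z1 :: "real^4"
    and a b c :: "((real \<Rightarrow> real^4) \<times> (real \<Rightarrow> real^4)) set"
  assumes tube_cont: "continuous_on (tor_dom k) \<phi>"
    and tube_inj: "inj_on \<phi> (tor_dom k)"
    and tube_S3: "\<phi> ` tor_dom k \<subseteq> S3"
    and orient: "\<epsilon> = 1 \<or> \<epsilon> = -1"
    and ball_cont: "continuous_on (cball 0 1) h"
    and ball_inj: "inj_on h (cball 0 1)"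
    and ball_S3: "h ` cball 0 1 \<subseteq> S3"
    and nbhd_in_ball: "nbhd \<phi> k \<subseteq> h ` cball 0 1"
    and v: "norm v = 1" and z0: "z0 = h v" and z1: "z1 = h (- v)"
    and a: "a \<in> biq \<phi> k z0 z1" and b: "b \<in> biq \<phi> k z0 z1" and c: "c \<in> biq \<phi> k z0 z1"
  shows
   "bq_down \<phi> k \<epsilon> z0 z1 (bq_up \<phi> k \<epsilon> z0 z1 a b) c = bq_up \<phi> k \<epsilon> z0 z1 (bq_down \<phi> k \<epsilon> z0 z1 a c) b \<and>
    bq_down \<phi> k \<epsilon> z0 z1 (bq_Up \<phi> k \<epsilon> z0 z1 a b) c = bq_Up \<phi> k \<epsilon> z0 z1 (bq_down \<phi> k \<epsilon> z0 z1 a c) b \<and>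
    bq_Down \<phi> k \<epsilon> z0 z1 (bq_up \<phi> k \<epsilon> z0 z1 a b) c = bq_up \<phi> k \<epsilon> z0 z1 (bq_Down \<phi> k \<epsilon> z0 z1 a c) b \<and>
    bq_Down \<phi> k \<epsilon> z0 z1 (bq_Up \<phi> k \<epsilon> z0 z1 a b) c = bq_Up \<phi> k \<epsilon> z0 z1 (bq_Down \<phi> k \<epsilon> z0 z1 a c) b \<and>
    bq_Up \<phi> k \<epsilon> z0 z1 (bq_up \<phi> k \<epsilon> z0 z1 a b) b = a \<and>
    bq_up \<phi> k \<epsilon> z0 z1 (bq_Up \<phi> k \<epsilon> z0 z1 a b) b = a \<and>
    bq_Down \<phi> k \<epsilon> z0 z1 (bq_down \<phi> k \<epsilon> z0 z1 a b) b = a \<and>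
    bq_down \<phi> k \<epsilon> z0 z1 (bq_Down \<phi> k \<epsilon> z0 z1 a b) b = a \<and>
    bq_up \<phi> k \<epsilon> z0 z1 a (bq_down \<phi> k \<epsilon> z0 z1 b c) = bq_up \<phi> k \<epsilon> z0 z1 a b \<and>
    bq_up \<phi> k \<epsilon> z0 z1 a (bq_Down \<phi> k \<epsilon> z0 z1 b c) = bq_up \<phi> k \<epsilon> z0 z1 a b \<and>
    bq_Up \<phi> k \<epsilon> z0 z1 a (bq_down \<phi> k \<epsilon> z0 z1 b c) = bq_Up \<phi> k \<epsilon> z0 z1 a b \<and>
    bq_Up \<phi> k \<epsilon> z0 z1 a (bq_Down \<phi> k \<epsilon> z0 z1 b c) = bq_Up \<phi> k \<epsilon> z0 z1 a b \<and>
    bq_down \<phi> k \<epsilon> z0 z1 a (bq_up \<phi> k \<epsilon> z0 z1 b c) = bq_down \<phi> k \<epsilon> z0 z1 a b \<and>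
    bq_down \<phi> k \<epsilon> z0 z1 a (bq_Up \<phi> k \<epsilon> z0 z1 b c) = bq_down \<phi> k \<epsilon> z0 z1 a b \<and>
    bq_Down \<phi> k \<epsilon> z0 z1 a (bq_up \<phi> k \<epsilon> z0 z1 b c) = bq_Down \<phi> k \<epsilon> z0 z1 a b \<and>
    bq_Down \<phi> k \<epsilon> z0 z1 a (bq_Up \<phi> k \<epsilon> z0 z1 b c) = bq_Down \<phi> k \<epsilon> z0 z1 a b"
proof -
  interpret link_tube \<phi> k using tube_cont tube_inj tube_S3 by unfold_locales
  have e: "\<bar>\<epsilon>\<bar> = 1" using orient by auto
  show ?thesis
    using a b c e
    by (simp add: bq_Up_eq bq_Down_eq bq_up_in_biq bq_down_in_biq
        bq_up_down_commute bq_up_down_absorb bq_down_up_absorb bq_up_cancel bq_down_cancel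
        bq_up_cancel[of "-\<epsilon>", simplified] bq_down_cancel[of "-\<epsilon>", simplified])
qed

end
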